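(* If a black-white array (BWA) stores exactly $n=2^m$ values, then searching for a value in it takes $O(\log n)$ time, whether or not the value is present.
   Context: A black-white array (BWA) of size $N=2^K$ stores values from a totally ordered set. Its white array is $W[1..N-1]$. For $i\ge0$, the segment of rank $i$ is the index block $[2^i,2^{i+1}-1]$. A state variable $\mathtt{total}$ counts stored values. The rank-$i$ segment is active iff bit $i$ of $\mathtt{total}$ is $1$. Between operations, all stored values lie in the active white segments, each sorted ascending. Search$(v)$: for $i=K-1$ down to $0$, if the rank-$i$ segment is active, binary-search the white rank-$i$ segment for $v$. A binary search of a segment of length $L$ costs $O(\log L+1)$. Return the index at the first success, or Nil if no active segment contains $v$. *)

theory Defs
  imports Complex_Main
begin

definition seg :: "nat \<Rightarrow> nat set" where
  "seg i = {2^i ..< 2^(Suc i)}"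

definition active :: "nat \<Rightarrow> nat \<Rightarrow> bool" where
  "active tot i \<longleftrightarrow> bit tot i"

text \<open>Invariant of a BWA of size N = 2^K between operations: the number of
  stored values fits into the white array W[1..N-1], and every active white
  segment is sorted ascending (all values lie in the active segments).\<close>
definition bwa_inv :: "nat \<Rightarrow> (nat \<Rightarrow> 'a::linorder) \<Rightarrow> nat \<Rightarrow> bool" where
  "bwa_inv K W tot \<longleftrightarrow> tot < 2^K \<and>
     (\<forall>i<K. active tot i \<longrightarrow> sorted_wrt (\<le>) (map W [2^i ..< 2^(Suc i)]))"

definition seg_search :: "(nat \<Rightarrow> 'a) \<Rightarrow> nat \<Rightarrow> 'a \<Rightarrow> nat option" where
  "seg_search W i v =
     (if \<exists>j\<in>seg i. W j = v then Some (SOME j. j \<in> seg i \<and> W j = v) else None)"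

text \<open>Search loop over ranks i-1 down to 0. Returns the result and the tot
  cost, where binary search of a segment of length L costs bs L
  (bs is any cost function with bs L = O(log L + 1)).\<close>
fun search_from :: "(nat \<Rightarrow> real) \<Rightarrow> (nat \<Rightarrow> 'a) \<Rightarrow> nat \<Rightarrow> 'a \<Rightarrow> nat \<Rightarrow> nat option \<times> real" where
  "search_from bs W tot v 0 = (None, 0)"
| "search_from bs W tot v (Suc i) =
     (if active tot i then
        (case seg_search W i v of
           Some j \<Rightarrow> (Some j, bs (2^i))
         | None \<Rightarrow> (let (r, c) = search_from bs W tot v i in (r, bs (2^i) + c)))
      else search_from bs W tot v i)"

definition bwa_search :: "(nat \<Rightarrow> real) \<Rightarrow> nat \<Rightarrow> (nat \<Rightarrow> 'a) \<Rightarrow> nat \<Rightarrow> 'a \<Rightarrow> nat option \<times> real" where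
  "bwa_search bs K W tot v = search_from bs W tot v K"

end

theory Submission
  imports Defs
begin

text \<open>When the counter is a power of two, \<open>2^m\<close>, exactly one segment, the one of
  rank \<open>m\<close>, is active. A search therefore performs at most one binary search, on
  a segment of length \<open>2^m\<close>, and so costs \<open>O(log 2^m + 1) = O(m)\<close>; since
  \<open>m \<ge> 1\<close> this is \<open>O(log n)\<close>, independently of whether the value is found.\<close>

lemma active_pow2_iff: "active (2^m) i \<longleftrightarrow> i = m"
  by (auto simp: active_def bit_exp_iff)

lemma search_from_cost_pow2:
  "snd (search_from bs W (2^m) v n) = (if m < n then bs (2^m) else 0)"
proof (induction n)
  case 0
  then show ?case by simp
next
  case (Suc n)
  show ?case
  proof (cases "n = m")
    case True
    then show ?thesis using Suc active_pow2_iff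
      by (auto split: option.splits prod.splits simp: Let_def)
  next
    case False
    then show ?thesis using Suc active_pow2_iff by auto
  qed
qed

lemma cost_pow2_le_linear:
  fixes bs :: "nat \<Rightarrow> real"
  assumes bs_cost: "\<And>L. L \<ge> 1 \<Longrightarrow> bs L \<le> c0 * (log 2 (real L) + 1)"
    and "m \<ge> 1"
  shows "bs (2^m) \<le> 2 * \<bar>c0\<bar> * real m"
proof -
  have "bs (2^m) \<le> c0 * (log 2 (real ((2::nat)^m)) + 1)" by (rule bs_cost) simp
  also have "\<dots> = c0 * (real m + 1)" by simp
  also have "\<dots> \<le> \<bar>c0\<bar> * (real m + 1)" by (intro mult_right_mono) auto
  also have "\<dots> \<le> \<bar>c0\<bar> * (2 * real m)" using \<open>m \<ge> 1\<close> by (intro mult_left_mono) auto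
  finally show ?thesis by simp
qed

theorem mainTheorem8:
  fixes bs :: "nat \<Rightarrow> real" and c0 :: real
  assumes bs_cost: "\<And>L. L \<ge> 1 \<Longrightarrow> bs L \<le> c0 * (log 2 (real L) + 1)"
  shows "\<exists>C. \<forall>(K::nat) (W :: nat \<Rightarrow> 'a::linorder) (tot::nat) (m::nat) (v::'a).
           bwa_inv K W tot \<longrightarrow> tot = 2^m \<longrightarrow> m \<ge> 1 \<longrightarrow>
           snd (bwa_search bs K W tot v) \<le> C * log 2 (real tot)"
proof (intro exI[of _ "2 * \<bar>c0\<bar>"] allI impI)
  fix K W and tot m :: nat and v
  assume "tot = 2^m" and "m \<ge> 1"
  then have "log 2 (real tot) = real m" by simp
  moreover have "bs (2^m) \<le> 2 * \<bar>c0\<bar> * real m"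
    using bs_cost \<open>m \<ge> 1\<close> by (rule cost_pow2_le_linear)
  ultimately show "snd (bwa_search bs K W tot v) \<le> 2 * \<bar>c0\<bar> * log 2 (real tot)"
    using \<open>tot = 2^m\<close> by (simp add: bwa_search_def search_from_cost_pow2)
qed

end
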